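(* Let $\overline f:[a,b]\to\mathbb{R}_\mathcal{I}$ be continuous on $[a,b]$. Then $\overline f$ is interval Riemann integrable on $[a,b]$.
   Context: $\mathbb{R}_\mathcal{I}$ denotes the set of all closed intervals $\overline a=[a_l,a_r]$ with $a_l<a_r$ (real numbers are not regarded as degenerate intervals). Each $\overline a$ is written as $\overline a=\langle a_c;a_w\rangle$ with center $a_c=\frac{a_l+a_r}{2}$ and radius $a_w=\frac{a_r-a_l}{2}>0$. The operations on $\mathbb{R}_\mathcal{I}$ are: addition $\overline a+\overline b=\langle a_c+b_c;\,a_w b_w\rangle$ and scalar multiplication $k\overline a=\langle k a_c;\,a_w^{k}\rangle$ for $k\in\mathbb{R}$. The distance is $d(\overline a,\overline b)=\sqrt{(a_c-b_c)^2+(\ln a_w-\ln b_w)^2}$. An interval-valued function $\overline f(t)=\langle f_c(t);f_w(t)\rangle$ on $[a,b]$ is continuous at $x$ if for every $\varepsilon>0$ there is $\delta>0$ with $d(\overline f(x),\overline f(y))<\varepsilon$ whenever $y\in[a,b]$, $|y-x|<\delta$; continuous on $[a,b]$ means continuous at every point. $\overline f$ is interval Riemann integrable on $[a,b]$ with integral $\overline A\in\mathbb{R}_\mathcal{I}$, written $\overline A=(IR)\int_a^b\overline f(t)\,\mathrm{d}t$, if for every $\varepsilon>0$ there is $\delta>0$ such that for every partition $a=t_0<t_1<\dots<t_n=b$ with $t_i-t_{i-1}<\delta$ and every choice of tags $\xi_i\in[t_{i-1},t_i]$, one has $d\big(\sum_{i=1}^n \overline f(\xi_i)(t_i-t_{i-1}),\overline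 A\big)<\varepsilon$, where the sum and scalar products use the operations above. *)

theory Defs
  imports "HOL-Analysis.Analysis"
begin

text \<open>An interval is represented by its center-radius pair (c, w) with w > 0.\<close>
type_synonym ivl = "real \<times> real"

definition RI :: "ivl set" where
  "RI = {p. snd p > 0}"

definition iadd :: "ivl \<Rightarrow> ivl \<Rightarrow> ivl" where
  "iadd a b = (fst a + fst b, snd a * snd b)"

definition iscale :: "real \<Rightarrow> ivl \<Rightarrow> ivl" where
  "iscale k a = (k * fst a, snd a powr k)"

definition idist :: "ivl \<Rightarrow> ivl \<Rightarrow> real" where
  "idist a b = sqrt ((fst a - fst b)^2 + (ln (snd a) - ln (snd b))^2)"

fun isum_from :: "(nat \<Rightarrow> ivl) \<Rightarrow> nat \<Rightarrow> ivl" where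
  "isum_from g 0 = (0, 1)"
| "isum_from g (Suc 0) = g 1"
| "isum_from g (Suc (Suc n)) = iadd (isum_from g (Suc n)) (g (Suc (Suc n)))"

definition icontinuous_at :: "real \<Rightarrow> real \<Rightarrow> (real \<Rightarrow> ivl) \<Rightarrow> real \<Rightarrow> bool" where
  "icontinuous_at a b f x \<longleftrightarrow>
     (\<forall>\<epsilon>>0. \<exists>\<delta>>0. \<forall>y\<in>{a..b}. \<bar>y - x\<bar> < \<delta> \<longrightarrow> idist (f x) (f y) < \<epsilon>)"

definition icontinuous_on :: "real \<Rightarrow> real \<Rightarrow> (real \<Rightarrow> ivl) \<Rightarrow> bool" where
  "icontinuous_on a b f \<longleftrightarrow> (\<forall>x\<in>{a..b}. icontinuous_at a b f x)"

definition fine_tagged_partition ::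
    "real \<Rightarrow> real \<Rightarrow> real \<Rightarrow> nat \<Rightarrow> (nat \<Rightarrow> real) \<Rightarrow> (nat \<Rightarrow> real) \<Rightarrow> bool" where
  "fine_tagged_partition a b \<delta> n t \<xi> \<longleftrightarrow>
     n \<ge> 1 \<and> t 0 = a \<and> t n = b \<and>
     (\<forall>i\<in>{1..n}. t (i - 1) < t i \<and> t i - t (i - 1) < \<delta> \<and> t (i - 1) \<le> \<xi> i \<and> \<xi> i \<le> t i)"

definition iriemann_sum :: "(real \<Rightarrow> ivl) \<Rightarrow> nat \<Rightarrow> (nat \<Rightarrow> real) \<Rightarrow> (nat \<Rightarrow> real) \<Rightarrow> ivl" where
  "iriemann_sum f n t \<xi> = isum_from (\<lambda>i. iscale (t i - t (i - 1)) (f (\<xi> i))) n"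

definition ihas_IR_integral :: "real \<Rightarrow> real \<Rightarrow> (real \<Rightarrow> ivl) \<Rightarrow> ivl \<Rightarrow> bool" where
  "ihas_IR_integral a b f A \<longleftrightarrow> A \<in> RI \<and>
     (\<forall>\<epsilon>>0. \<exists>\<delta>>0. \<forall>n t \<xi>. fine_tagged_partition a b \<delta> n t \<xi> \<longrightarrow>
        idist (iriemann_sum f n t \<xi>) A < \<epsilon>)"

definition iIR_integrable :: "real \<Rightarrow> real \<Rightarrow> (real \<Rightarrow> ivl) \<Rightarrow> bool" where
  "iIR_integrable a b f \<longleftrightarrow> (\<exists>A. ihas_IR_integral a b f A)"

end

theory Submission
  imports Defs
begin

text \<open>The map \<open>\<langle>c; w\<rangle> \<mapsto> (c, ln w)\<close> is an isometry from intervals with the distance \<open>d\<close>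
  onto the Euclidean plane which turns interval addition and scalar multiplication into vector
  addition and scalar multiplication. It therefore carries the interval Riemann sums of \<open>f\<close> to
  ordinary Riemann sums of the continuous plane-valued function \<open>(f\<^sub>c, ln f\<^sub>w)\<close>, which
  converge to its integral by uniform continuity; the integral of \<open>f\<close> is the interval
  corresponding to that limit.\<close>

definition ivl_log :: "ivl \<Rightarrow> real \<times> real" where
  "ivl_log p = (fst p, ln (snd p))"

lemma idist_eq_dist_ivl_log: "idist p q = dist (ivl_log p) (ivl_log q)"
  by (simp add: idist_def ivl_log_def dist_Pair_Pair dist_real_def)

lemma icontinuous_on_iff_continuous_on:
  "icontinuous_on a b f \<longleftrightarrow> continuous_on {a..b} (ivl_log \<circ> f)"
  unfolding icontinuous_on_def icontinuous_at_def continuous_on_iff idist_eq_dist_ivl_log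
  by (simp add: dist_real_def dist_commute abs_minus_commute)

lemma isum_from_eq_sum_prod: "isum_from g n = ((\<Sum>i=1..n. fst (g i)), (\<Prod>i=1..n. snd (g i)))"
  by (induction g n rule: isum_from.induct) (auto simp: iadd_def sum.cl_ivl_Suc prod.cl_ivl_Suc)

lemma ivl_log_isum_from:
  assumes "\<And>i. i \<in> {1..n} \<Longrightarrow> snd (g i) > 0"
  shows "ivl_log (isum_from g n) = (\<Sum>i=1..n. ivl_log (g i))"
proof -
  have "ln (\<Prod>i=1..n. snd (g i)) = (\<Sum>i=1..n. ln (snd (g i)))"
    using assms by (intro ln_prod) (auto intro!: less_imp_neq[symmetric])
  then show ?thesis
    by (simp add: isum_from_eq_sum_prod ivl_log_def prod_eq_iff fst_sum snd_sum)
qed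

lemma ivl_log_iscale: "ivl_log (iscale k p) = k *\<^sub>R ivl_log p"
  by (simp add: iscale_def ivl_log_def)

definition riemann_sum :: "(real \<Rightarrow> 'a::real_vector) \<Rightarrow> nat \<Rightarrow> (nat \<Rightarrow> real) \<Rightarrow> (nat \<Rightarrow> real) \<Rightarrow> 'a"
  where "riemann_sum h n t \<xi> = (\<Sum>i=1..n. (t i - t (i - 1)) *\<^sub>R h (\<xi> i))"

lemma ivl_log_iriemann_sum:
  assumes "\<And>i. i \<in> {1..n} \<Longrightarrow> snd (f (\<xi> i)) > 0"
  shows "ivl_log (iriemann_sum f n t \<xi>) = riemann_sum (ivl_log \<circ> f) n t \<xi>"
proof -
  have "snd (iscale (t i - t (i - 1)) (f (\<xi> i))) > 0" if "i \<in> {1..n}" for i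
    using assms[OF that] by (simp add: iscale_def)
  from ivl_log_isum_from[OF this] show ?thesis
    unfolding iriemann_sum_def riemann_sum_def by (simp add: ivl_log_iscale)
qed

lemma fine_tagged_partition_mono:
  assumes "fine_tagged_partition a b \<delta> n t \<xi>" "i \<le> j" "j \<le> n"
  shows "t i \<le> t j"
  using assms(2,3)
proof (induction j rule: dec_induct)
  case (step j)
  then have "Suc j \<in> {1..n}"
    by simp
  then have "t j < t (Suc j)"
    using assms(1) unfolding fine_tagged_partition_def by fastforce
  with step show ?case by simp
qed simp

lemma fine_tagged_partition_points:
  assumes "fine_tagged_partition a b \<delta> n t \<xi>" "i \<le> n"
  shows "t i \<in> {a..b}"
proof -
  have "t 0 = a" "t n = b"
    using assms(1) unfolding fine_tagged_partition_def by auto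
  then show ?thesis
    using fine_tagged_partition_mono[OF assms(1), of 0 i] fine_tagged_partition_mono[OF assms(1), of i n]
      assms(2) by auto
qed

lemma fine_tagged_partition_tags:
  assumes "fine_tagged_partition a b \<delta> n t \<xi>" "i \<in> {1..n}"
  shows "\<xi> i \<in> {a..b}"
proof -
  have "t (i - 1) \<le> \<xi> i" "\<xi> i \<le> t i"
    using assms unfolding fine_tagged_partition_def by auto
  moreover have "t (i - 1) \<in> {a..b}" "t i \<in> {a..b}"
    using fine_tagged_partition_points[OF assms(1), of "i - 1"]
      fine_tagged_partition_points[OF assms(1), of i] assms(2) by auto
  ultimately show ?thesis by auto
qed

lemma integral_eq_sum_fine_tagged_partition:
  fixes h :: "real \<Rightarrow> 'a::banach"
  assumes h: "continuous_on {a..b} h" and P: "fine_tagged_partition a b \<delta> n t \<xi>"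
  shows "integral {a..b} h = (\<Sum>i=1..n. integral {t (i - 1)..t i} h)"
proof -
  have "integral {a..t m} h = (\<Sum>i=1..m. integral {t (i - 1)..t i} h)" if "m \<le> n" for m
    using that
  proof (induction m)
    case 0
    then show ?case using P by (simp add: fine_tagged_partition_def)
  next
    case (Suc m)
    have ends: "a \<le> t m" "t m \<le> t (Suc m)" "t (Suc m) \<le> b"
      using Suc.prems fine_tagged_partition_points[OF P, of "Suc m"] fine_tagged_partition_points[OF P, of m]
        fine_tagged_partition_mono[OF P, of m "Suc m"] by auto
    then have "h integrable_on {a..t (Suc m)}"
      by (intro integrable_continuous_real continuous_on_subset[OF h]) auto
    with ends have "integral {a..t m} h + integral {t m..t (Suc m)} h = integral {a..t (Suc m)} h"
      by (intro Henstock_Kurzweil_Integration.integral_combine)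
    with Suc show ?case by simp
  qed
  from this[OF order_refl] show ?thesis
    using P by (simp add: fine_tagged_partition_def)
qed

lemma norm_scaleR_content_sub_integral_le:
  fixes h :: "real \<Rightarrow> 'a::banach"
  assumes "c \<le> d" "continuous_on {c..d} h" "\<And>s. s \<in> {c..d} \<Longrightarrow> norm (h x - h s) \<le> e"
  shows "norm ((d - c) *\<^sub>R h x - integral {c..d} h) \<le> (d - c) * e"
proof -
  have diff: "((\<lambda>s. h x - h s) has_integral ((d - c) *\<^sub>R h x - integral {c..d} h)) {c..d}"
    using has_integral_diff[OF has_integral_const_real[of "h x" c d]
        integrable_integral[OF integrable_continuous_real[OF assms(2)]]]
      assms(1) by (simp add: content_real)
  have "0 \<le> e"
    using assms(1) assms(3)[of c] by (meson atLeastAtMost_iff norm_ge_zero order.refl order.trans)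
  then show ?thesis
    using has_integral_bound_real[OF _ finite.emptyI diff, of e] assms by (simp add: mult.commute)
qed

lemma norm_riemann_sum_sub_integral_le:
  fixes h :: "real \<Rightarrow> 'a::banach"
  assumes h: "continuous_on {a..b} h" and P: "fine_tagged_partition a b \<delta> n t \<xi>"
    and osc: "\<And>x y. x \<in> {a..b} \<Longrightarrow> y \<in> {a..b} \<Longrightarrow> \<bar>x - y\<bar> < \<delta> \<Longrightarrow> norm (h x - h y) \<le> e"
  shows "norm (riemann_sum h n t \<xi> - integral {a..b} h) \<le> (b - a) * e"
proof -
  have cell_bound: "norm ((t i - t (i - 1)) *\<^sub>R h (\<xi> i) - integral {t (i - 1)..t i} h)
      \<le> (t i - t (i - 1)) * e" if i: "i \<in> {1..n}" for i
  proof (rule norm_scaleR_content_sub_integral_le)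
    have cell: "t (i - 1) \<le> \<xi> i" "\<xi> i \<le> t i" "t i - t (i - 1) < \<delta>"
      using P i unfolding fine_tagged_partition_def by auto
    have ends: "t (i - 1) \<in> {a..b}" "t i \<in> {a..b}"
      using fine_tagged_partition_points[OF P] i by auto
    show "t (i - 1) \<le> t i"
      using cell by simp
    show "continuous_on {t (i - 1)..t i} h"
      using ends by (auto intro: continuous_on_subset[OF h])
    show "norm (h (\<xi> i) - h s) \<le> e" if "s \<in> {t (i - 1)..t i}" for s
      using osc[of "\<xi> i" s] cell ends that by auto
  qed
  have "norm (riemann_sum h n t \<xi> - integral {a..b} h)
      = norm (\<Sum>i=1..n. (t i - t (i - 1)) *\<^sub>R h (\<xi> i) - integral {t (i - 1)..t i} h)"
    by (simp add: riemann_sum_def integral_eq_sum_fine_tagged_partition[OF h P] sum_subtractf)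
  also have "\<dots> \<le> (\<Sum>i=1..n. (t i - t (i - 1)) * e)"
    by (rule sum_norm_le) (rule cell_bound)
  also have "\<dots> = (b - a) * e"
    using P sum_telescope''[of 0 n t] by (simp add: fine_tagged_partition_def sum_distrib_right[symmetric])
  finally show ?thesis .
qed

lemma riemann_sum_approx_integral:
  fixes h :: "real \<Rightarrow> 'a::banach"
  assumes "a < b" "continuous_on {a..b} h" "\<epsilon> > 0"
  obtains \<delta> where "\<delta> > 0"
    "\<And>n t \<xi>. fine_tagged_partition a b \<delta> n t \<xi> \<Longrightarrow> norm (riemann_sum h n t \<xi> - integral {a..b} h) < \<epsilon>"
proof -
  define e where "e = \<epsilon> / (2 * (b - a))"
  have "e > 0"
    using assms by (simp add: e_def)
  moreover have "uniformly_continuous_on {a..b} h"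
    using assms(2) by (simp add: compact_uniformly_continuous)
  ultimately obtain \<delta> where "\<delta> > 0"
    and \<delta>: "\<And>x y. x \<in> {a..b} \<Longrightarrow> y \<in> {a..b} \<Longrightarrow> dist x y < \<delta> \<Longrightarrow> dist (h x) (h y) < e"
    unfolding uniformly_continuous_on_def by metis
  show thesis
  proof (rule that[OF \<open>\<delta> > 0\<close>])
    fix n t \<xi> assume "fine_tagged_partition a b \<delta> n t \<xi>"
    then have "norm (riemann_sum h n t \<xi> - integral {a..b} h) \<le> (b - a) * e"
      by (rule norm_riemann_sum_sub_integral_le[OF assms(2)])
        (use \<delta> in \<open>auto simp: dist_norm less_imp_le\<close>)
    also have "\<dots> < \<epsilon>"
      using assms by (simp add: e_def field_simps)
    finally show "norm (riemann_sum h n t \<xi> - integral {a..b} h) < \<epsilon>" .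
  qed
qed

lemma ihas_IR_integral_iff_riemann_sum_ivl_log:
  assumes "\<forall>x\<in>{a..b}. f x \<in> RI" and "A \<in> RI"
  shows "ihas_IR_integral a b f A \<longleftrightarrow>
    (\<forall>\<epsilon>>0. \<exists>\<delta>>0. \<forall>n t \<xi>. fine_tagged_partition a b \<delta> n t \<xi> \<longrightarrow>
       norm (riemann_sum (ivl_log \<circ> f) n t \<xi> - ivl_log A) < \<epsilon>)"
proof -
  have "idist (iriemann_sum f n t \<xi>) A = norm (riemann_sum (ivl_log \<circ> f) n t \<xi> - ivl_log A)"
    if P: "fine_tagged_partition a b \<delta> n t \<xi>" for \<delta> n t \<xi>
  proof -
    have "snd (f (\<xi> i)) > 0" if "i \<in> {1..n}" for i
      using assms(1) fine_tagged_partition_tags[OF P that] by (auto simp: RI_def)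
    from ivl_log_iriemann_sum[of n f \<xi> t, OF this] show ?thesis
      by (simp add: idist_eq_dist_ivl_log dist_norm)
  qed
  then show ?thesis
    using assms(2) unfolding ihas_IR_integral_def by (simp cong: imp_cong)
qed

theorem theorem5p2:
  fixes f :: "real \<Rightarrow> real \<times> real" and a b :: real
  assumes "a < b"
    and "\<forall>t\<in>{a..b}. f t \<in> RI"
    and "icontinuous_on a b f"
  shows "iIR_integrable a b f"
proof -
  have g: "continuous_on {a..b} (ivl_log \<circ> f)"
    using assms(3) by (simp add: icontinuous_on_iff_continuous_on)
  define I where "I = integral {a..b} (ivl_log \<circ> f)"
  define A where "A = (fst I, exp (snd I))"
  have "A \<in> RI" "ivl_log A = I"
    by (simp_all add: A_def RI_def ivl_log_def)
  then have "ihas_IR_integral a b f A"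
    unfolding ihas_IR_integral_iff_riemann_sum_ivl_log[OF assms(2) \<open>A \<in> RI\<close>] I_def
    by (metis riemann_sum_approx_integral[OF assms(1) g])
  then show ?thesis
    unfolding iIR_integrable_def by blast
qed

end
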